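(* In the setting of the multi-position greedy algorithm (positions $1,\dots,L$, pairwise disjoint ray sets $V_l$ with $|V_l|\ge K$, vectors $\mathbf p_j\in[0,1]^V$, $\boldsymbol\epsilon\in[0,1]^V$, $E=\sum_i\epsilon_i$, greedy iterates with final cost $f^{LK}=\sum_i b^{LK}_i$), let $$\mathrm{OPT}=\min\Big\{\sum_{i=1}^V\prod_{j\in J}p_{ij}\ :\ J\subseteq V_1\cup\dots\cup V_L,\ |J\cap V_l|\le K\ \forall l\Big\}>0,$$ let $R_1,\dots,R_{L-1}\ge 0$, and put $\overline{\mathrm{OPT}}_u=\mathrm{OPT}+\sum_{v=1}^u R_v$ for $u=0,\dots,L-1$. Assume that for every $t\in\{0,\dots,LK-1\}$ the set $A_t$ of rays available before iteration $t+1$ contains a nonempty subset $S$ with $|S|\le LK$ and $\sum_i\prod_{j\in S}p_{ij}\le\overline{\mathrm{OPT}}_{\lfloor t/K\rfloor}$. Let $0<\mathrm{LB}\le\mathrm{OPT}$. Then the approximation ratio $\rho=f^{LK}/\mathrm{OPT}$ satisfies $$\rho\le\frac{E}{\mathrm{LB}}\cdot\frac{1}{e}+\sum_{u=0}^{L-1}\gamma_u\Big(1+\frac{\sum_{v=1}^uR_v}{\mathrm{LB}}\Big),\qquad \gamma_u=\Big(1-e^{-1/L}\Big)\Big(e^{-1/L}\Big)^{L-1-u}.$$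
   Context: Multi-position greedy algorithm: $\mathbf b^0=\boldsymbol\epsilon$, $A_0=V_1\cup\dots\cup V_L$, $J_l=\emptyset$; at each iteration $t$ choose $j_t\in\arg\min_{j\in A_{t-1}}\sum_i b^{t-1}_ip_{ij}$ with position $l_t$, add $j_t$ to $J_{l_t}$, set $\mathbf b^t=\mathbf b^{t-1}\odot\mathbf p_{j_t}$ (coordinatewise product), and remove $j_t$ from the available set, removing all of $V_{l_t}$ instead if $|J_{l_t}|=K$. It runs $LK$ iterations. $R_v$ bounds the increase of the achievable optimum caused by closing the $v$-th position. $e$ is Euler's number. *)

theory Defs
  imports Complex_Main
begin

text \<open>Setting: coordinates i \<in> {1..n} (n is the paper's V), positions l \<in> {1..L},
  ray sets Vs l, vectors p j :: nat \<Rightarrow> real, initial vector eps.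
  A run of the greedy algorithm is given by the sequence js 1, ..., js (L*K)
  of chosen rays.\<close>

definition all_rays :: "(nat \<Rightarrow> 'r set) \<Rightarrow> nat \<Rightarrow> 'r set" where
  "all_rays Vs L = (\<Union>l\<in>{1..L}. Vs l)"

definition position_of :: "(nat \<Rightarrow> 'r set) \<Rightarrow> nat \<Rightarrow> 'r \<Rightarrow> nat" where
  "position_of Vs L j = (THE l. l \<in> {1..L} \<and> j \<in> Vs l)"

definition chosen_in :: "(nat \<Rightarrow> 'r set) \<Rightarrow> (nat \<Rightarrow> 'r) \<Rightarrow> nat \<Rightarrow> nat \<Rightarrow> 'r set" where
  "chosen_in Vs js t l = {js s | s. s \<in> {1..t} \<and> js s \<in> Vs l}"

primrec avail :: "(nat \<Rightarrow> 'r set) \<Rightarrow> nat \<Rightarrow> nat \<Rightarrow> (nat \<Rightarrow> 'r) \<Rightarrow> nat \<Rightarrow> 'r set" where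
  "avail Vs L K js 0 = all_rays Vs L"
| "avail Vs L K js (Suc t) =
     (let l = position_of Vs L (js (Suc t)) in
      if card (chosen_in Vs js (Suc t) l) = K
      then avail Vs L K js t - Vs l
      else avail Vs L K js t - {js (Suc t)})"

definition bvec :: "(nat \<Rightarrow> real) \<Rightarrow> ('r \<Rightarrow> nat \<Rightarrow> real) \<Rightarrow> (nat \<Rightarrow> 'r) \<Rightarrow> nat \<Rightarrow> nat \<Rightarrow> real" where
  "bvec eps p js t i = eps i * (\<Prod>s\<in>{1..t}. p (js s) i)"

definition greedy_run ::
  "nat \<Rightarrow> (nat \<Rightarrow> 'r set) \<Rightarrow> nat \<Rightarrow> nat \<Rightarrow> ('r \<Rightarrow> nat \<Rightarrow> real) \<Rightarrow> (nat \<Rightarrow> real) \<Rightarrow> (nat \<Rightarrow> 'r) \<Rightarrow> bool" where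
  "greedy_run n Vs L K p eps js \<longleftrightarrow>
     (\<forall>t\<in>{1..L*K}. js t \<in> avail Vs L K js (t - 1) \<and>
        (\<forall>j\<in>avail Vs L K js (t - 1).
           (\<Sum>i\<in>{1..n}. bvec eps p js (t - 1) i * p (js t) i)
             \<le> (\<Sum>i\<in>{1..n}. bvec eps p js (t - 1) i * p j i)))"

definition cost :: "nat \<Rightarrow> ('r \<Rightarrow> nat \<Rightarrow> real) \<Rightarrow> 'r set \<Rightarrow> real" where
  "cost n p J = (\<Sum>i\<in>{1..n}. \<Prod>j\<in>J. p j i)"

definition OPT :: "nat \<Rightarrow> (nat \<Rightarrow> 'r set) \<Rightarrow> nat \<Rightarrow> nat \<Rightarrow> ('r \<Rightarrow> nat \<Rightarrow> real) \<Rightarrow> real" where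
  "OPT n Vs L K p = Min (cost n p ` {J. J \<subseteq> all_rays Vs L \<and> (\<forall>l\<in>{1..L}. card (J \<inter> Vs l) \<le> K)})"

end

theory Submission
  imports Defs
begin

text \<open>Let f(t) be the total weight of b^t and N = LK. Against any available set S with |S| \<le> N the
  greedy ray does at least as well as the average over S, and \<Sum>_(j\<in>S) p_ji \<le> |S| - 1 + \<Prod>_(j\<in>S) p_ji
  for entries in [0,1]; together N f(t+1) \<le> (N - 1) f(t) + cost S. During the u-th block of K
  iterations (u = 0, ..., L - 1) the witnesses cost at most C_u = OPT + R_1 + ... + R_u, so f - C_u
  shrinks by the factor (1 - 1/N)^K \<le> e^(-1/L) over the block. Unrolling the L blocks gives
  f(LK) \<le> E/e + \<Sum>_u \<gamma>_u C_u, and dividing by OPT \<ge> LB bounds the ratio.\<close>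

lemma sum_le_card_minus_one_plus_prod:
  fixes x :: "'a \<Rightarrow> real"
  assumes "finite S" "\<forall>j\<in>S. 0 \<le> x j \<and> x j \<le> 1"
  shows "(\<Sum>j\<in>S. x j) \<le> real (card S) - 1 + (\<Prod>j\<in>S. x j)"
  using assms
proof (induction S rule: finite_induct)
  case empty
  then show ?case by simp
next
  case (insert a S)
  let ?P = "\<Prod>j\<in>S. x j"
  have xa: "0 \<le> x a" "x a \<le> 1" using insert.prems by auto
  have P: "0 \<le> ?P" "?P \<le> 1" using insert.prems by (auto intro: prod_nonneg prod_le_1)
  have "x a + ?P \<le> 1 + x a * ?P"
    using mult_nonneg_nonneg[of "1 - x a" "1 - ?P"] xa P by (simp add: algebra_simps)
  then show ?case using insert by simp
qed

lemma one_minus_power_le_exp: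
  fixes x :: real
  assumes "x \<le> 1"
  shows "(1 - x) ^ K \<le> exp (- (real K * x))"
proof -
  have "(1 - x) ^ K \<le> exp (- x) ^ K"
    using assms exp_ge_add_one_self[of "- x"] by (intro power_mono) auto
  also have "\<dots> = exp (- (real K * x))" by (simp add: exp_of_nat_mult[symmetric])
  finally show ?thesis .
qed

lemma scaled_step_mono_in_card:
  fixes x y c :: real
  assumes "real m * y \<le> (real m - 1) * x + c" "y \<le> x" "m \<le> N"
  shows "real N * y \<le> (real N - 1) * x + c"
proof -
  have "real N * (y - x) \<le> real m * (y - x)"
    using assms(2,3) by (intro mult_right_mono_neg) auto
  then show ?thesis using assms(1) by (simp add: algebra_simps)
qed

lemma scaled_step_contracts:
  fixes N x y W :: real
  assumes "N * y \<le> (N - 1) * x + W" "1 \<le> N"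
  shows "y - W \<le> (1 - 1 / N) * (x - W)"
proof -
  have "N * ((1 - 1 / N) * (x - W)) = (N - 1) * (x - W)" using assms(2) by (simp add: field_simps)
  then have "N * (y - W) \<le> N * ((1 - 1 / N) * (x - W))" using assms(1) by (simp add: algebra_simps)
  then show ?thesis using assms(2) by simp
qed

lemma decay_towards_level:
  fixes g :: "nat \<Rightarrow> real"
  assumes decr: "\<And>k. k < K \<Longrightarrow> g (Suc k) \<le> g k"
    and contr: "\<And>k. k < K \<Longrightarrow> g (Suc k) - W \<le> a * (g k - W)"
    and a: "0 \<le> a" "a ^ K \<le> r" and r: "r \<le> 1"
  shows "g K - W \<le> r * (g 0 - W)"
proof (cases "g 0 \<le> W")
  case True
  have "k \<le> K \<Longrightarrow> g k \<le> g 0" for k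
    by (induction k) (auto simp: Suc_le_eq intro: order_trans[OF decr])
  then have "g K - W \<le> g 0 - W" by simp
  also have "\<dots> \<le> r * (g 0 - W)" using True r by (simp add: mult_le_cancel_right1)
  finally show ?thesis .
next
  case False
  have "k \<le> K \<Longrightarrow> g k - W \<le> a ^ k * (g 0 - W)" for k
  proof (induction k)
    case 0
    then show ?case by simp
  next
    case (Suc k)
    then have IH: "g k - W \<le> a ^ k * (g 0 - W)" and k: "k < K" by auto
    show ?case
    proof (cases "0 \<le> g k - W")
      case True
      have "g (Suc k) - W \<le> a * (g k - W)" using contr k .
      also have "\<dots> \<le> a * (a ^ k * (g 0 - W))" using IH a by (intro mult_left_mono) auto
      finally show ?thesis by simp
    next
      case False
      have "0 \<le> a ^ Suc k * (g 0 - W)" using a \<open>\<not> g 0 \<le> W\<close> by simp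
      then show ?thesis using decr[OF k] False by linarith
    qed
  qed
  then have "g K - W \<le> a ^ K * (g 0 - W)" by simp
  also have "\<dots> \<le> r * (g 0 - W)" using a False by (intro mult_right_mono) auto
  finally show ?thesis .
qed

lemma linear_recurrence_unroll:
  fixes y C :: "nat \<Rightarrow> real"
  assumes step: "\<And>u. u < L \<Longrightarrow> y (Suc u) \<le> r * y u + (1 - r) * C u" and r: "0 \<le> r"
  shows "y L \<le> r ^ L * y 0 + (\<Sum>u<L. (1 - r) * r ^ (L - 1 - u) * C u)"
proof -
  have "m \<le> L \<Longrightarrow> y m \<le> r ^ m * y 0 + (\<Sum>u<m. (1 - r) * r ^ (m - 1 - u) * C u)" for m
  proof (induction m)
    case 0
    then show ?case by simp
  next
    case (Suc m)
    have shift: "r * (\<Sum>u<m. (1 - r) * r ^ (m - 1 - u) * C u)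
        = (\<Sum>u<m. (1 - r) * r ^ (Suc m - 1 - u) * C u)"
      unfolding sum_distrib_left
    proof (intro sum.cong refl)
      fix u assume "u \<in> {..<m}"
      then have "Suc m - 1 - u = Suc (m - 1 - u)" by auto
      then show "r * ((1 - r) * r ^ (m - 1 - u) * C u) = (1 - r) * r ^ (Suc m - 1 - u) * C u"
        by simp
    qed
    have "y (Suc m) \<le> r * y m + (1 - r) * C m" using step Suc.prems by simp
    also have "\<dots> \<le> r * (r ^ m * y 0 + (\<Sum>u<m. (1 - r) * r ^ (m - 1 - u) * C u)) + (1 - r) * C m"
      using Suc r by (simp add: mult_left_mono)
    also have "\<dots> = r ^ Suc m * y 0 + (\<Sum>u<Suc m. (1 - r) * r ^ (Suc m - 1 - u) * C u)"
      using shift by (simp add: algebra_simps)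
    finally show ?case .
  qed
  then show ?thesis by simp
qed

lemma ratio_bound_by_lower_bound:
  fixes x a E OPT LB :: real and \<gamma> s :: "nat \<Rightarrow> real"
  assumes x: "x \<le> a * E + (\<Sum>u\<in>U. \<gamma> u * (OPT + s u))"
    and LB: "0 < LB" "LB \<le> OPT" and nonneg: "0 \<le> a" "0 \<le> E"
    and "\<And>u. u \<in> U \<Longrightarrow> 0 \<le> \<gamma> u" "\<And>u. u \<in> U \<Longrightarrow> 0 \<le> s u"
  shows "x / OPT \<le> E / LB * a + (\<Sum>u\<in>U. \<gamma> u * (1 + s u / LB))"
proof -
  have OPT: "0 < OPT" using LB by simp
  have "(\<Sum>u\<in>U. \<gamma> u * (OPT + s u) / OPT) = (\<Sum>u\<in>U. \<gamma> u * (1 + s u / OPT))"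
    using OPT by (intro sum.cong refl) (simp add: field_simps)
  also have "\<dots> \<le> (\<Sum>u\<in>U. \<gamma> u * (1 + s u / LB))"
  proof (rule sum_mono)
    fix u assume "u \<in> U"
    then have "s u / OPT \<le> s u / LB" "0 \<le> \<gamma> u" using assms by (auto intro: divide_left_mono)
    then show "\<gamma> u * (1 + s u / OPT) \<le> \<gamma> u * (1 + s u / LB)" by (simp add: mult_left_mono)
  qed
  finally have "(\<Sum>u\<in>U. \<gamma> u * (OPT + s u) / OPT) \<le> (\<Sum>u\<in>U. \<gamma> u * (1 + s u / LB))" .
  moreover have "x / OPT \<le> a * E / OPT + (\<Sum>u\<in>U. \<gamma> u * (OPT + s u) / OPT)"
    using divide_right_mono[OF x, of OPT] OPT by (simp add: add_divide_distrib sum_divide_distrib)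
  moreover have "a * E / OPT \<le> E / LB * a"
    using mult_left_mono[OF divide_left_mono[OF LB(2) nonneg(2)] nonneg(1)] LB by (simp add: mult.commute)
  ultimately show ?thesis by linarith
qed

lemma bvec_Suc: "bvec eps p js (Suc t) i = bvec eps p js t i * p (js (Suc t)) i"
  by (simp add: bvec_def atLeastAtMostSuc_conv)

lemma avail_subset_all_rays: "avail Vs L K js t \<subseteq> all_rays Vs L"
  by (induction t) (auto simp: Let_def)

definition bvec_sum :: "nat \<Rightarrow> (nat \<Rightarrow> real) \<Rightarrow> ('r \<Rightarrow> nat \<Rightarrow> real) \<Rightarrow> (nat \<Rightarrow> 'r) \<Rightarrow> nat \<Rightarrow> real" where
  "bvec_sum n eps p js t = (\<Sum>i\<in>{1..n}. bvec eps p js t i)"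

locale greedy_process =
  fixes n L K :: nat and Vs :: "nat \<Rightarrow> 'r set" and p :: "'r \<Rightarrow> nat \<Rightarrow> real"
    and eps :: "nat \<Rightarrow> real" and js :: "nat \<Rightarrow> 'r"
  assumes greedy: "greedy_run n Vs L K p eps js"
    and finite_rays: "finite (all_rays Vs L)"
    and p_range: "\<forall>j\<in>all_rays Vs L. \<forall>i\<in>{1..n}. 0 \<le> p j i \<and> p j i \<le> 1"
    and eps_range: "\<forall>i\<in>{1..n}. 0 \<le> eps i \<and> eps i \<le> 1"
begin

abbreviation f :: "nat \<Rightarrow> real" where
  "f \<equiv> bvec_sum n eps p js"

lemma chosen_available: "t < L * K \<Longrightarrow> js (Suc t) \<in> avail Vs L K js t"
  using bspec[OF greedy[unfolded greedy_run_def], of "Suc t"] by simp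

lemma chosen_minimal:
  "t < L * K \<Longrightarrow> j \<in> avail Vs L K js t \<Longrightarrow>
    (\<Sum>i\<in>{1..n}. bvec eps p js t i * p (js (Suc t)) i) \<le> (\<Sum>i\<in>{1..n}. bvec eps p js t i * p j i)"
  using bspec[OF greedy[unfolded greedy_run_def], of "Suc t"] by simp

lemma chosen_ray: "t < L * K \<Longrightarrow> js (Suc t) \<in> all_rays Vs L"
  using chosen_available avail_subset_all_rays[of Vs L K js t] by blast

lemma bvec_bounds:
  assumes "t \<le> L * K" "i \<in> {1..n}"
  shows "0 \<le> bvec eps p js t i" "bvec eps p js t i \<le> 1"
proof -
  have "js s \<in> all_rays Vs L" if "s \<in> {1..t}" for s
  proof -
    have "s - 1 < L * K" using that assms(1) by auto
    then show ?thesis using chosen_ray[of "s - 1"] that by simp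
  qed
  then have "\<forall>s\<in>{1..t}. 0 \<le> p (js s) i \<and> p (js s) i \<le> 1"
    using p_range assms(2) by blast
  then have "0 \<le> (\<Prod>s\<in>{1..t}. p (js s) i)" "(\<Prod>s\<in>{1..t}. p (js s) i) \<le> 1"
    by (auto intro: prod_nonneg prod_le_1)
  then show "0 \<le> bvec eps p js t i" "bvec eps p js t i \<le> 1"
    using eps_range assms unfolding bvec_def by (auto intro: mult_le_one)
qed

lemma bvec_sum_Suc_le: "t < L * K \<Longrightarrow> f (Suc t) \<le> f t"
  unfolding bvec_sum_def bvec_Suc
  using bvec_bounds chosen_ray p_range by (intro sum_mono) (auto intro: mult_left_le)

lemma bvec_sum_card_step:
  assumes t: "t < L * K" and S: "S \<subseteq> avail Vs L K js t"
  shows "real (card S) * f (Suc t) \<le> (real (card S) - 1) * f t + cost n p S"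
proof -
  have S_rays: "S \<subseteq> all_rays Vs L" using S avail_subset_all_rays[of Vs L K js t] by blast
  then have "finite S" using finite_rays finite_subset by blast
  let ?b = "\<lambda>i. bvec eps p js t i"
  have "real (card S) * f (Suc t) = (\<Sum>j\<in>S. \<Sum>i\<in>{1..n}. ?b i * p (js (Suc t)) i)"
    by (simp add: bvec_sum_def bvec_Suc)
  also have "\<dots> \<le> (\<Sum>j\<in>S. \<Sum>i\<in>{1..n}. ?b i * p j i)"
    by (rule sum_mono) (use chosen_minimal[OF t] S in blast)
  also have "\<dots> = (\<Sum>i\<in>{1..n}. ?b i * (\<Sum>j\<in>S. p j i))"
    by (subst sum.swap) (simp add: sum_distrib_left)
  also have "\<dots> \<le> (\<Sum>i\<in>{1..n}. ?b i * (real (card S) - 1) + (\<Prod>j\<in>S. p j i))"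
  proof (rule sum_mono)
    fix i assume i: "i \<in> {1..n}"
    have pS: "\<forall>j\<in>S. 0 \<le> p j i \<and> p j i \<le> 1" using S_rays p_range i by blast
    have b: "0 \<le> ?b i" "?b i \<le> 1" using bvec_bounds t i by auto
    have "?b i * (\<Sum>j\<in>S. p j i) \<le> ?b i * (real (card S) - 1 + (\<Prod>j\<in>S. p j i))"
      using sum_le_card_minus_one_plus_prod[OF \<open>finite S\<close> pS] b by (intro mult_left_mono) auto
    also have "\<dots> \<le> ?b i * (real (card S) - 1) + (\<Prod>j\<in>S. p j i)"
      using b prod_nonneg[of S "\<lambda>j. p j i"] pS
      by (simp add: distrib_left mult_left_le_one_le)
    finally show "?b i * (\<Sum>j\<in>S. p j i) \<le> ?b i * (real (card S) - 1) + (\<Prod>j\<in>S. p j i)" .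
  qed
  also have "\<dots> = (real (card S) - 1) * f t + cost n p S"
    by (simp add: sum.distrib bvec_sum_def cost_def sum_distrib_left mult.commute)
  finally show ?thesis .
qed

lemma bvec_sum_step:
  assumes t: "t < L * K" and S: "S \<subseteq> avail Vs L K js t" "card S \<le> L * K"
  shows "real (L * K) * f (Suc t) \<le> (real (L * K) - 1) * f t + cost n p S"
  using scaled_step_mono_in_card[OF bvec_sum_card_step[OF t S(1)] bvec_sum_Suc_le[OF t] S(2)] .

lemma bvec_sum_block:
  assumes LK: "1 \<le> L" "1 \<le> K" and u: "u < L"
    and witness: "\<forall>t<L * K. \<exists>S. S \<subseteq> avail Vs L K js t \<and> card S \<le> L * K \<and> cost n p S \<le> C (t div K)"
  shows "f (Suc u * K) \<le> exp (- 1 / real L) * f (u * K) + (1 - exp (- 1 / real L)) * C u"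
proof -
  let ?a = "1 - 1 / real (L * K)"
  have "1 \<le> L * K" using mult_le_mono[OF LK] by simp
  then have N: "1 \<le> real (L * K)" by linarith
  have "f (u * K + K) - C u \<le> exp (- 1 / real L) * (f (u * K + 0) - C u)"
  proof (rule decay_towards_level[where g = "\<lambda>k. f (u * K + k)"])
    fix k assume k: "k < K"
    have "u * K + k < Suc u * K" using k by simp
    also have "\<dots> \<le> L * K" using u by (intro mult_right_mono) auto
    finally have t: "u * K + k < L * K" .
    then show "f (u * K + Suc k) \<le> f (u * K + k)" using bvec_sum_Suc_le by simp
    have "(u * K + k) div K = u" using k by simp
    then obtain S where S: "S \<subseteq> avail Vs L K js (u * K + k)" "card S \<le> L * K" "cost n p S \<le> C u"
      using witness t by metis
    have "real (L * K) * f (Suc (u * K + k)) \<le> (real (L * K) - 1) * f (u * K + k) + C u"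
      using bvec_sum_step[OF t S(1,2)] S(3) by linarith
    then show "f (u * K + Suc k) - C u \<le> ?a * (f (u * K + k) - C u)"
      using scaled_step_contracts N by simp
  next
    show "0 \<le> ?a" using N by simp
    have "real K * (1 / real (L * K)) = 1 / real L" using LK by simp
    then show "?a ^ K \<le> exp (- 1 / real L)"
      using one_minus_power_le_exp[of "1 / real (L * K)" K] N by simp
  qed simp
  then show ?thesis by (simp add: algebra_simps)
qed

lemma bvec_sum_final_bound:
  assumes LK: "1 \<le> L" "1 \<le> K"
    and witness: "\<forall>t<L * K. \<exists>S. S \<subseteq> avail Vs L K js t \<and> card S \<le> L * K \<and> cost n p S \<le> C (t div K)"
  shows "f (L * K) \<le> exp (- 1) * (\<Sum>i\<in>{1..n}. eps i)
           + (\<Sum>u<L. (1 - exp (- 1 / real L)) * exp (- 1 / real L) ^ (L - 1 - u) * C u)"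
proof -
  have "f (L * K) \<le> exp (- 1 / real L) ^ L * f (0 * K)
           + (\<Sum>u<L. (1 - exp (- 1 / real L)) * exp (- 1 / real L) ^ (L - 1 - u) * C u)"
    using linear_recurrence_unroll[where y = "\<lambda>u. f (u * K)"] bvec_sum_block[OF LK _ witness] by simp
  moreover have "exp (- 1 / real L) ^ L = exp (- 1)"
    using LK by (simp add: exp_of_nat_mult[symmetric])
  ultimately show ?thesis by (simp add: bvec_sum_def bvec_def)
qed

end

theorem theorem3:
  fixes n L K :: nat and Vs :: "nat \<Rightarrow> 'r set" and p :: "'r \<Rightarrow> nat \<Rightarrow> real"
    and eps :: "nat \<Rightarrow> real" and js :: "nat \<Rightarrow> 'r" and R :: "nat \<Rightarrow> real" and LB :: real
  assumes L_pos: "L \<ge> 1" and K_pos: "K \<ge> 1"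
    and Vs_fin: "\<forall>l\<in>{1..L}. finite (Vs l)"
    and Vs_card: "\<forall>l\<in>{1..L}. card (Vs l) \<ge> K"
    and Vs_disj: "\<forall>l\<in>{1..L}. \<forall>l'\<in>{1..L}. l \<noteq> l' \<longrightarrow> Vs l \<inter> Vs l' = {}"
    and p_range: "\<forall>j\<in>all_rays Vs L. \<forall>i\<in>{1..n}. 0 \<le> p j i \<and> p j i \<le> 1"
    and eps_range: "\<forall>i\<in>{1..n}. 0 \<le> eps i \<and> eps i \<le> 1"
    and greedy: "greedy_run n Vs L K p eps js"
    and OPT_pos: "OPT n Vs L K p > 0"
    and R_nonneg: "\<forall>v\<in>{1..L-1}. R v \<ge> 0"
    and witness: "\<forall>t<L*K. \<exists>S. S \<subseteq> avail Vs L K js t \<and> S \<noteq> {} \<and> card S \<le> L*K \<and>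
                     cost n p S \<le> OPT n Vs L K p + (\<Sum>v\<in>{1..t div K}. R v)"
    and LB_pos: "0 < LB" and LB_le: "LB \<le> OPT n Vs L K p"
  shows "(\<Sum>i\<in>{1..n}. bvec eps p js (L*K) i) / OPT n Vs L K p
           \<le> (\<Sum>i\<in>{1..n}. eps i) / LB * (1 / exp 1)
             + (\<Sum>u\<in>{0..L-1}. ((1 - exp (- 1 / real L)) * (exp (- 1 / real L)) ^ (L - 1 - u))
                                * (1 + (\<Sum>v\<in>{1..u}. R v) / LB))"
proof -
  interpret greedy_process n L K Vs p eps js
    using greedy p_range eps_range Vs_fin by unfold_locales (auto simp: all_rays_def)
  define C where "C u = OPT n Vs L K p + (\<Sum>v\<in>{1..u}. R v)" for u
  have "\<forall>t<L * K. \<exists>S. S \<subseteq> avail Vs L K js t \<and> card S \<le> L * K \<and> cost n p S \<le> C (t div K)"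
    using witness unfolding C_def by blast
  then have "bvec_sum n eps p js (L * K) \<le> exp (- 1) * (\<Sum>i\<in>{1..n}. eps i)
           + (\<Sum>u<L. (1 - exp (- 1 / real L)) * exp (- 1 / real L) ^ (L - 1 - u) * C u)"
    by (rule bvec_sum_final_bound[OF L_pos K_pos])
  moreover have "0 \<le> (\<Sum>v\<in>{1..u}. R v)" if "u < L" for u
    using R_nonneg that by (intro sum_nonneg) auto
  ultimately have "bvec_sum n eps p js (L * K) / OPT n Vs L K p \<le> (\<Sum>i\<in>{1..n}. eps i) / LB * exp (- 1)
      + (\<Sum>u<L. ((1 - exp (- 1 / real L)) * exp (- 1 / real L) ^ (L - 1 - u)) * (1 + (\<Sum>v\<in>{1..u}. R v) / LB))"
    unfolding C_def
    using eps_range by (intro ratio_bound_by_lower_bound[OF _ LB_pos LB_le])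
      (auto simp: mult.assoc intro: sum_nonneg)
  moreover have "{..<L} = {0..L - 1}" using L_pos by auto
  ultimately show ?thesis by (simp add: bvec_sum_def exp_minus inverse_eq_divide)
qed

end
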